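(* Let $\Lambda=(\lambda_{ij})$ be the transition intensity matrix of an ergodic continuous-time Markov chain on $\mathbb{S}=\{a_1,\dots,a_d\}$ (distinct points). Let $N_s$ be a $d\times d$ matrix-valued process whose off-diagonal entries $N^{ij}_s$, $i\ne j$, are independent Poisson processes with intensities $\lambda_{ij}$, and whose diagonal entries are $N^{ii}_s=-\sum_{j\ne i}N^{ij}_s$. Let $\eta_0$ and $\tilde\eta_0$ be random vectors with values in the standard basis $\{e_1,\dots,e_d\}$ of $\mathbb{R}^d$, independent of each other and of $N$, and let $\eta,\tilde\eta$ be the solutions of the Itô equations $$\eta_t=\eta_0+\int_0^t dN_s^*\,\eta_{s-},\qquad \tilde\eta_t=\tilde\eta_0+\int_0^t dN_s^*\,\tilde\eta_{s-}$$ (driven by the same $N$). Set $X_t=\sum_{i=1}^d a_i\eta_t(i)$, $\tilde X_t=\sum_{i=1}^d a_i\tilde\eta_t(i)$ and $\tau=\inf\{t\ge0: X_t=\tilde X_t\}$ (with $\inf\emptyset=\infty$). Then almost surely $\lim_{n\to\infty}\mathbf{1}\{\tau\ge n\}=0$.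
   Context: A continuous-time Markov chain with intensity matrix $\Lambda$ is ergodic if the limits $\mu_i=\lim_{t\to\infty}\mathsf{P}(X_t=a_i)$ exist, are strictly positive and are independent of the initial distribution. Under the construction above, $\eta_t$ stays in the standard basis and $X$, $\tilde X$ are Markov chains with intensity matrix $\Lambda$. *)

theory Defs
  imports "HOL-Probability.Probability"
begin

text \<open>Square matrices of size d are represented as functions nat => nat => real,
  only the entries with indices < d being relevant (indices 0..d-1 stand for 1..d).\<close>

definition mat_mult :: "nat \<Rightarrow> (nat \<Rightarrow> nat \<Rightarrow> real) \<Rightarrow> (nat \<Rightarrow> nat \<Rightarrow> real) \<Rightarrow> nat \<Rightarrow> nat \<Rightarrow> real" where
  "mat_mult d A B i j = (\<Sum>k<d. A i k * B k j)"

fun mat_pow :: "nat \<Rightarrow> (nat \<Rightarrow> nat \<Rightarrow> real) \<Rightarrow> nat \<Rightarrow> nat \<Rightarrow> nat \<Rightarrow> real" where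
  "mat_pow d A 0 = (\<lambda>i j. if i = j then 1 else 0)"
| "mat_pow d A (Suc n) = mat_mult d (mat_pow d A n) A"

definition trans_fun :: "nat \<Rightarrow> (nat \<Rightarrow> nat \<Rightarrow> real) \<Rightarrow> real \<Rightarrow> nat \<Rightarrow> nat \<Rightarrow> real" where
  "trans_fun d L t i j = (\<Sum>n. t ^ n / fact n * mat_pow d L n i j)"

definition intensity_matrix :: "nat \<Rightarrow> (nat \<Rightarrow> nat \<Rightarrow> real) \<Rightarrow> bool" where
  "intensity_matrix d L \<longleftrightarrow>
     (\<forall>i<d. \<forall>j<d. i \<noteq> j \<longrightarrow> 0 \<le> L i j) \<and>
     (\<forall>i<d. L i i = - (\<Sum>j\<in>{..<d} - {i}. L i j))"

definition prob_vector :: "nat \<Rightarrow> (nat \<Rightarrow> real) \<Rightarrow> bool" where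
  "prob_vector d p \<longleftrightarrow> (\<forall>i<d. 0 \<le> p i) \<and> (\<Sum>i<d. p i) = 1"

text \<open>Ergodicity: for every initial distribution p, P(X_t = a_j) = sum_i p_i exp(t Lambda)_ij
  converges to a limit mu_j > 0 that does not depend on p.\<close>
definition ergodic_chain :: "nat \<Rightarrow> (nat \<Rightarrow> nat \<Rightarrow> real) \<Rightarrow> bool" where
  "ergodic_chain d L \<longleftrightarrow>
     (\<exists>mu. (\<forall>j<d. 0 < mu j) \<and>
       (\<forall>p. prob_vector d p \<longrightarrow>
          (\<forall>j<d. ((\<lambda>t. \<Sum>i<d. p i * trans_fun d L t i j) \<longlongrightarrow> mu j) at_top)))"

definition poisson_process :: "'a measure \<Rightarrow> real \<Rightarrow> ('a \<Rightarrow> real \<Rightarrow> nat) \<Rightarrow> bool" where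
  "poisson_process M r N \<longleftrightarrow>
     (\<forall>t. (\<lambda>\<omega>. N \<omega> t) \<in> measurable M (count_space UNIV)) \<and>
     (AE \<omega> in M. N \<omega> 0 = 0 \<and> mono_on {0..} (N \<omega>) \<and>
        (\<forall>t\<ge>0. ((\<lambda>u. real (N \<omega> u)) \<longlongrightarrow> real (N \<omega> t)) (at_right t))) \<and>
     (\<forall>s t k. 0 \<le> s \<longrightarrow> s \<le> t \<longrightarrow>
        measure M {\<omega> \<in> space M. N \<omega> t - N \<omega> s = k}
          = (r * (t - s)) ^ k / fact k * exp (- (r * (t - s)))) \<and>
     (\<forall>n (ts :: nat \<Rightarrow> real). 0 \<le> ts 0 \<longrightarrow> (\<forall>i<n. ts i \<le> ts (Suc i)) \<longrightarrow>
        prob_space.indep_vars M (\<lambda>_. count_space UNIV)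
          (\<lambda>i \<omega>. N \<omega> (ts (Suc i)) - N \<omega> (ts i)) {..<n})"

definition stieltjes_int :: "(real \<Rightarrow> nat) \<Rightarrow> (real \<Rightarrow> real) \<Rightarrow> real \<Rightarrow> real" where
  "stieltjes_int F f t =
     (LINT s:{0<..t}|interval_measure (\<lambda>u. real (F (max u 0))). f s)"

definition left_lim :: "(real \<Rightarrow> real) \<Rightarrow> real \<Rightarrow> real" where
  "left_lim g s = Lim (at_left s) g"

definition std_basis :: "nat \<Rightarrow> (nat \<Rightarrow> real) set" where
  "std_basis d = {(\<lambda>i. if i = k then 1 else 0) | k. k < d}"

text \<open>eta is a (pathwise, cadlag) solution of eta_t = eta_0 + int_0^t dN_s^* eta_{s-},
  where N^{kk} = - sum_{j ~= k} N^{kj}; componentwise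
  (N^* eta)(k) = sum_{l ~= k} N^{lk} eta(l) + N^{kk} eta(k).\<close>
definition sde_solution ::
  "nat \<Rightarrow> (nat \<Rightarrow> nat \<Rightarrow> real \<Rightarrow> nat) \<Rightarrow> (nat \<Rightarrow> real) \<Rightarrow> (real \<Rightarrow> nat \<Rightarrow> real) \<Rightarrow> bool" where
  "sde_solution d N e0 e \<longleftrightarrow>
     (\<forall>k<d. \<forall>t\<ge>0. ((\<lambda>u. e u k) \<longlongrightarrow> e t k) (at_right t)) \<and>
     (\<forall>k<d. \<forall>t>0. \<exists>l. ((\<lambda>u. e u k) \<longlongrightarrow> l) (at_left t)) \<and>
     (\<forall>k<d. \<forall>t\<ge>0. e t k = e0 k
        + (\<Sum>l\<in>{..<d} - {k}. stieltjes_int (N l k) (left_lim (\<lambda>u. e u l)) t)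
        - (\<Sum>j\<in>{..<d} - {k}. stieltjes_int (N k j) (left_lim (\<lambda>u. e u k)) t))"

end

theory Submission
  imports Defs
begin

text \<open>
  A letter \<open>(i, j)\<close> with \<open>\<lambda>\<^sub>i\<^sub>j > 0\<close> acts on states by sending \<open>i\<close> to \<open>j\<close> and on mass
  vectors by moving the mass sitting at \<open>i\<close> onto \<open>j\<close>. Ergodicity makes every state reachable
  by such letters, which yields a synchronizing word \<open>w\<close>: its action sends every state to the
  first one. If during \<open>length w\<close> consecutive unit time slots the only jump of \<open>N\<close> in slot
  \<open>q\<close> is a single jump of the entry indexed by the \<open>q\<close>-th letter, every solution of the equation
  is transported by this action, so \<open>\<eta>\<close> and \<open>\<eta>'\<close> both end at \<open>e\<^sub>1\<close> and \<open>X\<close> meets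
  \<open>X'\<close>. Poisson increments over disjoint slots are independent, so successive blocks of
  \<open>length w\<close> slots realise the word independently with one fixed positive probability; almost
  surely some block does, so \<open>\<tau>\<close> is finite.
\<close>

section \<open>Synchronizing words\<close>

fun redirect :: "nat \<times> nat \<Rightarrow> nat \<Rightarrow> nat" where
  "redirect (i, j) x = (if x = i then j else x)"

fun shift_mass :: "nat \<times> nat \<Rightarrow> (nat \<Rightarrow> real) \<Rightarrow> nat \<Rightarrow> real" where
  "shift_mass (i, j) v k = (if k = i then 0 else if k = j then v j + v i else v k)"

definition redirect_word :: "(nat \<times> nat) list \<Rightarrow> nat \<Rightarrow> nat" where
  "redirect_word w x = foldl (\<lambda>y e. redirect e y) x w"

definition shift_mass_word :: "(nat \<times> nat) list \<Rightarrow> (nat \<Rightarrow> real) \<Rightarrow> nat \<Rightarrow> real" where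
  "shift_mass_word w v = foldl (\<lambda>u e. shift_mass e u) v w"

lemma redirect_word_Nil [simp]: "redirect_word [] x = x"
  by (simp add: redirect_word_def)

lemma redirect_word_Cons [simp]: "redirect_word (e # w) x = redirect_word w (redirect e x)"
  by (simp add: redirect_word_def)

lemma redirect_word_append: "redirect_word (u @ w) x = redirect_word w (redirect_word u x)"
  by (simp add: redirect_word_def)

lemma shift_mass_word_Nil [simp]: "shift_mass_word [] v = v"
  by (simp add: shift_mass_word_def)

lemma shift_mass_word_snoc: "shift_mass_word (w @ [e]) v = shift_mass e (shift_mass_word w v)"
  by (simp add: shift_mass_word_def)

lemma redirect_word_in:
  assumes "set w \<subseteq> R" "R \<subseteq> D \<times> D" "x \<in> D"
  shows "redirect_word w x \<in> D"
  using assms by (induction w arbitrary: x) auto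

lemma shift_mass_word_eq_sum:
  assumes "set w \<subseteq> {(i, j). i < d \<and> j < d \<and> i \<noteq> j}" "k < d"
  shows "shift_mass_word w v k = (\<Sum>l | l < d \<and> redirect_word w l = k. v l)"
  using assms
proof (induction w arbitrary: k rule: rev_induct)
  case Nil
  then have "{l. l < d \<and> l = k} = {k}" by auto
  then show ?case by simp
next
  case (snoc e w)
  obtain i j where e: "e = (i, j)" and ij: "i < d" "j < d" "i \<noteq> j"
    using snoc.prems(1) by auto
  let ?S = "\<lambda>k. {l. l < d \<and> redirect_word w l = k}"
  have preimage: "{l. l < d \<and> redirect_word (w @ [(i, j)]) l = k} =
      (if k = i then {} else if k = j then ?S j \<union> ?S i else ?S k)"
    using ij by (auto simp: redirect_word_append)
  have "(\<Sum>l\<in>?S j \<union> ?S i. v l) = (\<Sum>l\<in>?S j. v l) + (\<Sum>l\<in>?S i. v l)"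
    by (rule sum.union_disjoint) (use ij in auto)
  then show ?case
    using snoc ij unfolding e by (simp add: shift_mass_word_snoc preimage)
qed

lemma shift_mass_word_synchronizing:
  assumes "set w \<subseteq> {(i, j). i < d \<and> j < d \<and> i \<noteq> j}" "\<forall>l<d. redirect_word w l = c" "k < d"
  shows "shift_mass_word w v k = (if k = c then (\<Sum>l<d. v l) else 0)"
proof -
  have "{l. l < d \<and> redirect_word w l = k} = (if k = c then {..<d} else {})"
    using assms(2) by auto
  then show ?thesis
    using shift_mass_word_eq_sum[OF assms(1,3)] by simp
qed

lemma rtrancl_redirect_word:
  assumes "(x, c) \<in> R\<^sup>*"
  shows "\<exists>p. set p \<subseteq> R \<and> redirect_word p x = c \<and> redirect_word p c = c"
  using assms
proof (induction rule: converse_rtrancl_induct)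
  case base
  show ?case by (rule exI[of _ "[]"]) simp
next
  case (step x y)
  then obtain p where p: "set p \<subseteq> R" "redirect_word p y = c" "redirect_word p c = c"
    by blast
  show ?case
    by (rule exI[of _ "(x, y) # p"]) (use step.hyps(1) p in auto)
qed

lemma synchronizing_word_exists:
  assumes "finite D" "R \<subseteq> D \<times> D" "\<forall>x\<in>D. (x, c) \<in> R\<^sup>*"
  shows "\<exists>w. set w \<subseteq> R \<and> (\<forall>x\<in>D. redirect_word w x = c)"
proof -
  have "\<exists>w. set w \<subseteq> R \<and> redirect_word w c = c \<and> (\<forall>x\<in>S. redirect_word w x = c)"
    if "S \<subseteq> D" for S
    using finite_subset[OF that assms(1)] that
  proof (induction S rule: finite_induct)
    case empty
    show ?case by (rule exI[of _ "[]"]) simp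
  next
    case (insert x S)
    then obtain u where u: "set u \<subseteq> R" "redirect_word u c = c" "\<forall>y\<in>S. redirect_word u y = c"
      by blast
    have "redirect_word u x \<in> D"
      using redirect_word_in[OF u(1) assms(2)] insert.prems by blast
    then obtain p where p: "set p \<subseteq> R" "redirect_word p (redirect_word u x) = c"
        "redirect_word p c = c"
      using rtrancl_redirect_word assms(3) by blast
    show ?case
      by (rule exI[of _ "u @ p"]) (use u p in \<open>auto simp: redirect_word_append\<close>)
  qed
  then show ?thesis by blast
qed

section \<open>Reachability in an ergodic chain\<close>

definition jump_relation :: "nat \<Rightarrow> (nat \<Rightarrow> nat \<Rightarrow> real) \<Rightarrow> (nat \<times> nat) set" where
  "jump_relation d L = {(i, j). i < d \<and> j < d \<and> i \<noteq> j \<and> 0 < L i j}"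

lemma mat_pow_closed_class:
  assumes closed: "\<And>a b. a \<in> S \<Longrightarrow> b < d \<Longrightarrow> b \<notin> S \<Longrightarrow> L a b = 0"
    and "i \<in> S" "l < d" "l \<notin> S"
  shows "mat_pow d L n i l = 0"
  using assms(3,4)
proof (induction n arbitrary: l)
  case 0
  then show ?case using \<open>i \<in> S\<close> by auto
next
  case (Suc n)
  have "mat_pow d L n i a * L a l = 0" if "a < d" for a
    using Suc closed[of a l] that by (cases "a \<in> S") auto
  then show ?case
    unfolding mat_pow.simps mat_mult_def by (intro sum.neutral) simp
qed

lemma trans_fun_closed_class:
  assumes "\<And>a b. a \<in> S \<Longrightarrow> b < d \<Longrightarrow> b \<notin> S \<Longrightarrow> L a b = 0"
    and "i \<in> S" "l < d" "l \<notin> S"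
  shows "trans_fun d L t i l = 0"
  using mat_pow_closed_class[OF assms] by (simp add: trans_fun_def)

lemma ergodic_chain_reachable:
  assumes erg: "ergodic_chain d L" and L: "intensity_matrix d L" and "i < d" "k < d"
  shows "(i, k) \<in> (jump_relation d L)\<^sup>*"
proof (rule ccontr)
  let ?R = "jump_relation d L"
  define S where "S = {l. l < d \<and> (i, l) \<in> ?R\<^sup>*}"
  assume "(i, k) \<notin> ?R\<^sup>*"
  then have "k \<notin> S" by (simp add: S_def)
  have closed: "L a b = 0" if "a \<in> S" "b < d" "b \<notin> S" for a b
  proof (rule ccontr)
    assume "L a b \<noteq> 0"
    moreover have "a \<noteq> b" "0 \<le> L a b"
      using that L by (auto simp: intensity_matrix_def S_def)
    ultimately have "(a, b) \<in> ?R"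
      using that by (auto simp: jump_relation_def S_def)
    with that show False
      by (auto simp: S_def intro: rtrancl_into_rtrancl)
  qed
  obtain mu where mu: "\<forall>j<d. 0 < mu j" and lim: "\<forall>p. prob_vector d p \<longrightarrow>
      (\<forall>j<d. ((\<lambda>t. \<Sum>a<d. p a * trans_fun d L t a j) \<longlongrightarrow> mu j) at_top)"
    using erg unfolding ergodic_chain_def by blast
  have "i \<in> S"
    using \<open>i < d\<close> by (simp add: S_def)
  have "trans_fun d L t i k = 0" for t
    by (rule trans_fun_closed_class[where S = S and L = L, OF closed \<open>i \<in> S\<close> \<open>k < d\<close> \<open>k \<notin> S\<close>])
  define p where "p a = (of_bool (a = i) :: real)" for a
  have "prob_vector d p"
    using \<open>i < d\<close> by (simp add: prob_vector_def p_def)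
  then have "((\<lambda>t. \<Sum>a<d. p a * trans_fun d L t a k) \<longlongrightarrow> mu k) at_top"
    using lim \<open>k < d\<close> by blast
  moreover have "(\<lambda>t. \<Sum>a<d. p a * trans_fun d L t a k) = (\<lambda>t. 0)"
  proof -
    have "{..<d} \<inter> {a. a = i} = {i}"
      using \<open>i < d\<close> by auto
    then show ?thesis
      using \<open>trans_fun d L _ i k = 0\<close> by (simp add: p_def)
  qed
  ultimately have "((\<lambda>t::real. 0) \<longlongrightarrow> mu k) at_top"
    by simp
  then have "mu k = 0"
    by (simp add: tendsto_const_iff)
  with mu \<open>k < d\<close> show False by auto
qed

lemma ergodic_chain_synchronizing_word:
  assumes "ergodic_chain d L" "intensity_matrix d L"
  shows "\<exists>w. set w \<subseteq> jump_relation d L \<and> (\<forall>l<d. redirect_word w l = 0)"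
proof (cases "d = 0")
  case False
  have "jump_relation d L \<subseteq> {..<d} \<times> {..<d}"
    by (auto simp: jump_relation_def)
  moreover have "\<forall>l\<in>{..<d}. (l, 0) \<in> (jump_relation d L)\<^sup>*"
    using ergodic_chain_reachable[OF assms] False by blast
  ultimately show ?thesis
    using synchronizing_word_exists[of "{..<d}" "jump_relation d L" 0] by auto
qed (rule exI[of _ "[]"], simp)

section \<open>Stieltjes integrals along counting paths\<close>

definition counting_path :: "(real \<Rightarrow> nat) \<Rightarrow> bool" where
  "counting_path F \<longleftrightarrow>
     mono_on {0..} F \<and> (\<forall>t\<ge>0. ((\<lambda>u. real (F u)) \<longlongrightarrow> real (F t)) (at_right t))"

abbreviation stieltjes_measure :: "(real \<Rightarrow> nat) \<Rightarrow> real measure" where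
  "stieltjes_measure F \<equiv> interval_measure (\<lambda>u. real (F (max u 0)))"

definition cadlag :: "(real \<Rightarrow> real) \<Rightarrow> bool" where
  "cadlag g \<longleftrightarrow> (\<forall>x\<ge>0. (g \<longlongrightarrow> g x) (at_right x)) \<and> (\<forall>x>0. \<exists>l. (g \<longlongrightarrow> l) (at_left x))"

lemma counting_path_mono: "counting_path F \<Longrightarrow> 0 \<le> x \<Longrightarrow> x \<le> y \<Longrightarrow> F x \<le> F y"
  unfolding counting_path_def by (auto simp: mono_on_def)

lemma tendsto_at_right_max_0:
  fixes g :: "real \<Rightarrow> 'a::topological_space"
  assumes "\<And>x. 0 \<le> x \<Longrightarrow> (g \<longlongrightarrow> g x) (at_right x)"
  shows "((\<lambda>x. g (max x 0)) \<longlongrightarrow> g (max a 0)) (at_right a)"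
proof (cases "a < 0")
  case True
  have "eventually (\<lambda>x. x \<in> {a<..<0}) (at_right a)"
    by (rule eventually_at_right_real[OF True])
  then have "eventually (\<lambda>x. g (max x 0) = g (max a 0)) (at_right a)"
    by eventually_elim (use True in auto)
  then show ?thesis by (rule tendsto_eventually)
next
  case False
  have "eventually (\<lambda>x. g x = g (max x 0)) (at_right a)"
    using eventually_at_right_less[of a] by eventually_elim (use False in auto)
  then show ?thesis
    using assms[of a] False by (auto intro: tendsto_cong[THEN iffD1])
qed

lemma emeasure_stieltjes_measure:
  assumes F: "counting_path F" and "0 \<le> a" "a \<le> b"
  shows "emeasure (stieltjes_measure F) {a<..b} = ennreal (real (F b) - real (F a))"
proof -
  have "emeasure (stieltjes_measure F) {a<..b} = ennreal (real (F (max b 0)) - real (F (max a 0)))"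
  proof (rule emeasure_interval_measure_Ioc[OF \<open>a \<le> b\<close>])
    show "real (F (max x 0)) \<le> real (F (max y 0))" if "x \<le> y" for x y
      using counting_path_mono[OF F] that by simp
    show "continuous (at_right x) (\<lambda>u. real (F (max u 0)))" for x
      unfolding continuous_within
      by (rule tendsto_at_right_max_0[where g = "\<lambda>u. real (F u)"]) (use F in \<open>simp add: counting_path_def\<close>)
  qed
  then show ?thesis using assms by simp
qed

lemma borel_measurable_stieltjes_measure [simp]:
  "borel_measurable (stieltjes_measure F) = borel_measurable borel"
  by (rule measurable_cong_sets) simp_all

lemma cadlag_left_lim:
  assumes "cadlag g" "0 < x"
  shows "(g \<longlongrightarrow> left_lim g x) (at_left x)"
proof -
  obtain l where l: "(g \<longlongrightarrow> l) (at_left x)"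
    using assms by (auto simp: cadlag_def)
  then have "left_lim g x = l"
    unfolding left_lim_def by (intro tendsto_Lim) auto
  with l show ?thesis by simp
qed

lemma cadlag_locally_bounded:
  assumes "cadlag g" "0 \<le> x"
  shows "\<exists>\<delta>>0. \<exists>B. \<forall>y\<ge>0. dist y x < \<delta> \<longrightarrow> \<bar>g y\<bar> \<le> B"
proof -
  have "eventually (\<lambda>y. dist (g y) (g x) < 1) (at_right x)"
    using assms by (intro tendstoD) (auto simp: cadlag_def)
  then obtain b where b: "x < b" "\<forall>y>x. y < b \<longrightarrow> dist (g y) (g x) < 1"
    by (auto simp: eventually_at_right_field)
  obtain a l where a: "a < x" "\<forall>y>a. y < x \<longrightarrow> 0 \<le> y \<longrightarrow> dist (g y) l < 1"
  proof (cases "0 < x")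
    case True
    then have "eventually (\<lambda>y. dist (g y) (left_lim g x) < 1) (at_left x)"
      using cadlag_left_lim[OF assms(1)] by (intro tendstoD) auto
    then show ?thesis
      using that by (auto simp: eventually_at_left_field)
  next
    case False
    then show ?thesis
      using that[of "x - 1" 0] assms(2) by auto
  qed
  have "\<bar>g y\<bar> \<le> \<bar>g x\<bar> + \<bar>l\<bar> + 1" if "0 \<le> y" "dist y x < min (b - x) (x - a)" for y
    using that a(2)[rule_format, of y] b(2)[rule_format, of y]
    by (cases y x rule: linorder_cases) (auto simp: dist_real_def)
  moreover have "0 < min (b - x) (x - a)"
    using a b by simp
  ultimately show ?thesis by blast
qed

lemma cadlag_bounded:
  assumes "cadlag g"
  shows "\<exists>B. \<forall>x\<in>{0..T}. \<bar>g x\<bar> \<le> B"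
proof -
  obtain \<delta> B where \<delta>: "\<And>x. 0 \<le> x \<Longrightarrow> 0 < \<delta> x"
    and B: "\<And>x y. 0 \<le> x \<Longrightarrow> 0 \<le> y \<Longrightarrow> dist y x < \<delta> x \<Longrightarrow> \<bar>g y\<bar> \<le> B x"
  proof -
    have "\<forall>x. \<exists>\<delta> B. 0 \<le> x \<longrightarrow> 0 < \<delta> \<and> (\<forall>y\<ge>0. dist y x < \<delta> \<longrightarrow> \<bar>g y\<bar> \<le> B)"
      using cadlag_locally_bounded[OF assms] by blast
    then show ?thesis
      using that by metis
  qed
  have cover: "{0..T} \<subseteq> (\<Union>x\<in>{0..T}. ball x (\<delta> x))"
    using \<delta> by force
  obtain D where D: "D \<subseteq> {0..T}" "finite D" "{0..T} \<subseteq> (\<Union>x\<in>D. ball x (\<delta> x))"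
    by (rule compactE_image[OF compact_Icc _ cover]) auto
  have "\<bar>g y\<bar> \<le> (\<Sum>x\<in>D. \<bar>B x\<bar>)" if y: "y \<in> {0..T}" for y
  proof -
    obtain x where x: "x \<in> D" "dist x y < \<delta> x"
      using D(3) y by auto
    then have "\<bar>g y\<bar> \<le> \<bar>B x\<bar>"
      using B[of x y] D(1) y by (force simp: dist_commute)
    also have "\<dots> \<le> (\<Sum>x\<in>D. \<bar>B x\<bar>)"
      by (rule member_le_sum) (use x D in auto)
    finally show ?thesis .
  qed
  then show ?thesis by blast
qed

lemma cadlag_left_lim_bounded:
  assumes "cadlag g" "\<forall>x\<in>{0..T}. \<bar>g x\<bar> \<le> B" "x \<in> {0<..T}"
  shows "\<bar>left_lim g x\<bar> \<le> B"
proof (rule tendsto_upperbound)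
  show "((\<lambda>y. \<bar>g y\<bar>) \<longlongrightarrow> \<bar>left_lim g x\<bar>) (at_left x)"
    using cadlag_left_lim[OF assms(1)] assms(3) by (intro tendsto_rabs) auto
  show "eventually (\<lambda>y. \<bar>g y\<bar> \<le> B) (at_left x)"
    using eventually_at_left_real[of 0 x] assms(3)
    by (auto elim!: eventually_mono intro: assms(2)[rule_format])
qed auto

lemma right_continuous_borel_measurable:
  fixes h :: "real \<Rightarrow> real"
  assumes "\<And>x. (h \<longlongrightarrow> h x) (at_right x)"
  shows "h \<in> borel_measurable borel"
proof (rule borel_measurable_LIMSEQ_real)
  define y where "y n x = (of_int \<lfloor>real (Suc n) * x\<rfloor> + 1) / real (Suc n)" for n x
  show "(\<lambda>x. h (y n x)) \<in> borel_measurable borel" for n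
  proof -
    have "(\<lambda>x. \<lfloor>real (Suc n) * x\<rfloor>) \<in> borel \<rightarrow>\<^sub>M count_space UNIV"
      by measurable
    then show ?thesis
      using measurable_compose_countable[where f = "\<lambda>k x. h ((of_int k + 1) / real (Suc n))"]
      by (simp add: y_def)
  qed
  fix x
  have bounds: "x < y n x \<and> y n x \<le> x + 1 / real (Suc n)" for n
  proof
    have pos: "0 < real (Suc n)" by simp
    have "real (Suc n) * x < of_int \<lfloor>real (Suc n) * x\<rfloor> + 1"
      by linarith
    then show "x < y n x"
      using pos unfolding y_def by (simp add: pos_less_divide_eq mult.commute)
    have "y n x \<le> (real (Suc n) * x + 1) / real (Suc n)"
      unfolding y_def by (rule divide_right_mono) linarith+
    also have "\<dots> = x + 1 / real (Suc n)"
      using pos by (simp add: add_divide_distrib)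
    finally show "y n x \<le> x + 1 / real (Suc n)" .
  qed
  have "(\<lambda>n. x + 1 / real (Suc n)) \<longlonglongrightarrow> x"
    using tendsto_add[OF tendsto_const LIMSEQ_Suc[OF lim_const_over_n[of 1]], of x] by simp
  then have "(\<lambda>n. y n x) \<longlonglongrightarrow> x"
    by (rule tendsto_sandwich[OF _ _ tendsto_const, rotated 2])
      (use bounds in \<open>auto intro: always_eventually less_imp_le\<close>)
  moreover have "\<forall>n. y n x \<in> {x<..} \<and> y n x \<noteq> x"
    using bounds by (metis greaterThan_iff less_irrefl)
  ultimately have "filterlim (\<lambda>n. y n x) (at_right x) sequentially"
    by (simp add: filterlim_at always_eventually)
  then show "(\<lambda>n. h (y n x)) \<longlonglongrightarrow> h x"
    by (rule filterlim_compose[OF assms])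
qed

text \<open>For \<open>x \<le> 0\<close> the value \<open>left_lim g x\<close> is an unspecified \<open>Lim\<close>, hence the indicator.\<close>

lemma left_lim_indicator_measurable:
  assumes g: "cadlag g"
  shows "(\<lambda>x. indicator {0<..t} x * left_lim g x) \<in> borel_measurable borel"
proof (rule borel_measurable_LIMSEQ_real)
  define y where "y n x = x - 1 / real (Suc n)" for n x
  have "(\<lambda>x. g (max x 0)) \<in> borel_measurable borel"
    by (rule right_continuous_borel_measurable, rule tendsto_at_right_max_0)
      (use g in \<open>auto simp: cadlag_def\<close>)
  then have "(\<lambda>x. g (max (y n x) 0)) \<in> borel_measurable borel" for n
    using measurable_compose[of "\<lambda>x. y n x" borel borel] by (simp add: y_def)
  then show "(\<lambda>x. indicator {0<..t} x * g (max (y n x) 0)) \<in> borel_measurable borel" for n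
    by (intro borel_measurable_times) auto
  fix x :: real
  show "(\<lambda>n. indicator {0<..t} x * g (max (y n x) 0)) \<longlonglongrightarrow> indicator {0<..t} x * left_lim g x"
  proof (cases "x \<in> {0<..t}")
    case True
    have y: "(\<lambda>n. y n x) \<longlonglongrightarrow> x"
      using tendsto_diff[OF tendsto_const LIMSEQ_Suc[OF lim_const_over_n[of 1]], of x]
      by (simp add: y_def)
    moreover have "\<forall>n. y n x \<in> {..<x} \<and> y n x \<noteq> x"
      by (simp add: y_def)
    ultimately have "filterlim (\<lambda>n. y n x) (at_left x) sequentially"
      by (simp add: filterlim_at always_eventually)
    moreover have "(g \<longlongrightarrow> left_lim g x) (at_left x)"
      using cadlag_left_lim[OF g] True by simp
    ultimately have "(\<lambda>n. g (y n x)) \<longlonglongrightarrow> left_lim g x"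
      by (rule filterlim_compose[rotated])
    moreover have "eventually (\<lambda>n. 0 < y n x) sequentially"
      using order_tendstoD(1)[OF y, of 0] True by simp
    then have "eventually (\<lambda>n. g (y n x) = g (max (y n x) 0)) sequentially"
      by eventually_elim auto
    ultimately show ?thesis
      using True by (auto intro: tendsto_cong[THEN iffD1])
  qed simp
qed

lemma stieltjes_set_integrable:
  assumes F: "counting_path F" and g: "cadlag g" and "0 \<le> t"
  shows "set_integrable (stieltjes_measure F) {0<..t} (left_lim g)"
proof -
  obtain B where B: "\<forall>x\<in>{0..t}. \<bar>g x\<bar> \<le> B"
    using cadlag_bounded[OF g] by blast
  have "emeasure (stieltjes_measure F) {0<..t} < \<infinity>"
    using emeasure_stieltjes_measure[OF F order_refl \<open>0 \<le> t\<close>] by simp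
  then have "integrable (stieltjes_measure F) (\<lambda>x. B * indicator {0<..t} x)"
    by (intro integrable_mult_right integrable_real_indicator) auto
  then show ?thesis
    unfolding set_integrable_def
  proof (rule Bochner_Integration.integrable_bound)
    show "(\<lambda>x. indicator {0<..t} x *\<^sub>R left_lim g x) \<in> borel_measurable (stieltjes_measure F)"
      using left_lim_indicator_measurable[OF g] by simp
    show "AE x in stieltjes_measure F.
        norm (indicator {0<..t} x *\<^sub>R left_lim g x) \<le> norm (B * indicator {0<..t} x)"
    proof (intro AE_I2)
      have "\<bar>left_lim g x\<bar> \<le> \<bar>B\<bar>" if "x \<in> {0<..t}" for x
        using cadlag_left_lim_bounded[OF g B that] by linarith
      then show "norm (indicator {0<..t} x *\<^sub>R left_lim g x) \<le> norm (B * indicator {0<..t} x)" for x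
        by (simp split: split_indicator)
    qed
  qed
qed

lemma stieltjes_int_split:
  assumes F: "counting_path F" and g: "cadlag g" and "0 \<le> s" "s \<le> t"
  shows "stieltjes_int F (left_lim g) t =
    stieltjes_int F (left_lim g) s + (LINT x:{s<..t}|stieltjes_measure F. left_lim g x)"
proof -
  have I: "set_integrable (stieltjes_measure F) {0<..t} (left_lim g)"
    using stieltjes_set_integrable[OF F g] assms(3,4) by simp
  have "{0<..t} = {0<..s} \<union> {s<..t}"
    using assms(3,4) by auto
  moreover have "(LINT x:{0<..s} \<union> {s<..t}|stieltjes_measure F. left_lim g x) =
      (LINT x:{0<..s}|stieltjes_measure F. left_lim g x) + (LINT x:{s<..t}|stieltjes_measure F. left_lim g x)"
    by (intro set_integral_Un set_integrable_subset[OF I]) (use assms(3,4) in auto)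
  ultimately show ?thesis
    by (simp add: stieltjes_int_def)
qed

lemma stieltjes_int_flat:
  assumes F: "counting_path F" and g: "cadlag g" and "0 \<le> s" "s \<le> t" and "F t = F s"
  shows "stieltjes_int F (left_lim g) t = stieltjes_int F (left_lim g) s"
proof -
  have "{s<..t} \<in> null_sets (stieltjes_measure F)"
    using emeasure_stieltjes_measure[OF F assms(3,4)] assms(5) by (simp add: null_sets_def)
  then have "AE x in stieltjes_measure F. indicator {s<..t} x *\<^sub>R left_lim g x = 0"
    by (rule AE_not_in[THEN eventually_mono]) simp
  then have "(LINT x:{s<..t}|stieltjes_measure F. left_lim g x) = 0"
    unfolding set_lebesgue_integral_def by (rule integral_eq_zero_AE)
  then show ?thesis
    using stieltjes_int_split[OF F g assms(3,4)] by simp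
qed

lemma stieltjes_int_const_integrand:
  assumes F: "counting_path F" and g: "cadlag g" and "0 \<le> s" "s \<le> t"
    and c: "\<And>x. x \<in> {s<..t} \<Longrightarrow> left_lim g x = c"
  shows "stieltjes_int F (left_lim g) t =
    stieltjes_int F (left_lim g) s + c * (real (F t) - real (F s))"
proof -
  have measure: "emeasure (stieltjes_measure F) {s<..t} = ennreal (real (F t) - real (F s))"
    by (rule emeasure_stieltjes_measure[OF F assms(3,4)])
  have "(LINT x:{s<..t}|stieltjes_measure F. left_lim g x) = (LINT x:{s<..t}|stieltjes_measure F. c)"
    by (rule set_lebesgue_integral_cong) (use c in auto)
  also have "\<dots> = measure (stieltjes_measure F) {s<..t} * c"
    using measure by (simp add: set_integral_const)
  also have "measure (stieltjes_measure F) {s<..t} = real (F t) - real (F s)"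
    using measure counting_path_mono[OF F assms(3,4)] by (simp add: measure_def)
  finally show ?thesis
    using stieltjes_int_split[OF F g assms(3,4)] by simp
qed

lemma counting_path_flat_between:
  assumes "counting_path F" "0 \<le> s" "s \<le> v" "v \<le> t" "F t = F s"
  shows "F v = F s"
  using counting_path_mono[OF assms(1,2,3)] counting_path_mono[OF assms(1), of v t] assms(2-5)
  by simp

lemma counting_path_eventually_const:
  assumes F: "counting_path F" and "0 \<le> u"
  shows "eventually (\<lambda>v. F v = F u) (at_right u)"
proof -
  have "((\<lambda>v. real (F v)) \<longlongrightarrow> real (F u)) (at_right u)"
    using F \<open>0 \<le> u\<close> by (simp add: counting_path_def)
  then have "eventually (\<lambda>v. dist (real (F v)) (real (F u)) < 1) (at_right u)"
    by (rule tendstoD) simp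
  then show ?thesis
    by eventually_elim (simp add: dist_real_def)
qed

lemma counting_path_first_jump:
  assumes F: "counting_path F" and "0 \<le> s" "s \<le> t" "F s < F t"
  shows "\<exists>u. s < u \<and> u \<le> t \<and> F s < F u \<and> (\<forall>v. s \<le> v \<longrightarrow> v < u \<longrightarrow> F v = F s)"
proof -
  define U where "U = {v. s \<le> v \<and> v \<le> t \<and> F s < F v}"
  define u where "u = Inf U"
  have "t \<in> U" "bdd_below U"
    using assms(3,4) by (auto simp: U_def intro: bdd_belowI[of _ s])
  have "s \<le> u"
    unfolding u_def by (rule cInf_greatest) (use \<open>t \<in> U\<close> in \<open>auto simp: U_def\<close>)
  have "u \<le> t"
    unfolding u_def by (rule cInf_lower[OF \<open>t \<in> U\<close> \<open>bdd_below U\<close>])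
  have flat: "F v = F s" if "s \<le> v" "v < u" for v
  proof (rule ccontr)
    assume "F v \<noteq> F s"
    then have "v \<in> U"
      using counting_path_mono[OF F \<open>0 \<le> s\<close> \<open>s \<le> v\<close>] that \<open>u \<le> t\<close> by (auto simp: U_def)
    then have "u \<le> v"
      unfolding u_def by (rule cInf_lower[OF _ \<open>bdd_below U\<close>])
    with \<open>v < u\<close> show False by simp
  qed
  have "F s < F u"
  proof -
    have "eventually (\<lambda>v. F v = F u) (at_right u)"
      using counting_path_eventually_const[OF F] \<open>0 \<le> s\<close> \<open>s \<le> u\<close> by simp
    then obtain b where "u < b" and b: "\<forall>v>u. v < b \<longrightarrow> F v = F u"
      by (auto simp: eventually_at_right_field)
    obtain v where "v \<in> U" "v < b"
      using cInf_less_iff[OF _ \<open>bdd_below U\<close>] \<open>t \<in> U\<close> \<open>u < b\<close> by (auto simp: u_def)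
    moreover have "u \<le> v"
      using cInf_lower[OF \<open>v \<in> U\<close> \<open>bdd_below U\<close>] by (simp add: u_def)
    ultimately have "F v = F u"
      using b by (cases "u = v") simp_all
    with \<open>v \<in> U\<close> show ?thesis
      by (simp add: U_def)
  qed
  moreover from this have "s < u"
    using \<open>s \<le> u\<close> by (cases "s = u") auto
  ultimately show ?thesis
    using \<open>u \<le> t\<close> flat by blast
qed

section \<open>Pathwise dynamics of the jump equation\<close>

text \<open>\<open>mass_flow F e a b s t\<close> is the integral of \<open>\<eta>(u-, a)\<close> against \<open>dN\<^sup>a\<^sup>b(u)\<close> over
  \<open>(s, t]\<close>, the mass carried from \<open>a\<close> to \<open>b\<close> during that interval.\<close>

definition mass_flow ::
  "(nat \<Rightarrow> nat \<Rightarrow> real \<Rightarrow> nat) \<Rightarrow> (real \<Rightarrow> nat \<Rightarrow> real) \<Rightarrow> nat \<Rightarrow> nat \<Rightarrow> real \<Rightarrow> real \<Rightarrow> real" where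
  "mass_flow F e a b s t =
     stieltjes_int (F a b) (left_lim (\<lambda>u. e u a)) t - stieltjes_int (F a b) (left_lim (\<lambda>u. e u a)) s"

lemma sde_solution_cadlag:
  assumes "sde_solution d F e0 e" "k < d"
  shows "cadlag (\<lambda>u. e u k)"
  using assms unfolding sde_solution_def cadlag_def by blast

lemma sde_solutionD:
  assumes "sde_solution d F e0 e" "k < d" "0 \<le> t"
  shows "e t k = e0 k
    + (\<Sum>l\<in>{..<d} - {k}. stieltjes_int (F l k) (left_lim (\<lambda>u. e u l)) t)
    - (\<Sum>j\<in>{..<d} - {k}. stieltjes_int (F k j) (left_lim (\<lambda>u. e u k)) t)"
  using assms unfolding sde_solution_def by blast

lemma sde_solution_increment:
  assumes "sde_solution d F e0 e" "k < d" "0 \<le> s" "s \<le> t"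
  shows "e t k = e s k
    + (\<Sum>l\<in>{..<d} - {k}. mass_flow F e l k s t) - (\<Sum>j\<in>{..<d} - {k}. mass_flow F e k j s t)"
  using sde_solutionD[OF assms(1,2), of s] sde_solutionD[OF assms(1,2), of t] assms(3,4)
  by (simp add: mass_flow_def sum_subtractf)

lemma sde_solution_sum:
  assumes "sde_solution d F e0 e" "0 \<le> t"
  shows "(\<Sum>k<d. e t k) = (\<Sum>k<d. e0 k)"
proof -
  define G where "G a b = stieltjes_int (F a b) (left_lim (\<lambda>u. e u a)) t" for a b
  have "e t k = e0 k + ((\<Sum>l<d. G l k) - G k k) - ((\<Sum>j<d. G k j) - G k k)" if "k < d" for k
    using sde_solutionD[OF assms(1) that assms(2)] that
    by (simp add: G_def sum_diff1)
  then have "(\<Sum>k<d. e t k) = (\<Sum>k<d. e0 k) + ((\<Sum>k<d. \<Sum>l<d. G l k) - (\<Sum>k<d. \<Sum>j<d. G k j))"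
    by (simp add: sum.distrib sum_subtractf)
  also have "(\<Sum>k<d. \<Sum>l<d. G l k) = (\<Sum>k<d. \<Sum>j<d. G k j)"
    by (rule sum.swap)
  finally show ?thesis by simp
qed

lemma mass_flow_flat:
  assumes "counting_path (F a b)" "cadlag (\<lambda>u. e u a)" "0 \<le> s" "s \<le> t" "F a b t = F a b s"
  shows "mass_flow F e a b s t = 0"
  using stieltjes_int_flat[OF assms] by (simp add: mass_flow_def)

lemma sde_solution_flat:
  assumes sde: "sde_solution d F e0 e"
    and paths: "\<And>a b. a < d \<Longrightarrow> b < d \<Longrightarrow> a \<noteq> b \<Longrightarrow> counting_path (F a b)"
    and "0 \<le> s" "s \<le> t"
    and flat: "\<And>a b. a < d \<Longrightarrow> b < d \<Longrightarrow> a \<noteq> b \<Longrightarrow> F a b t = F a b s"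
    and "k < d"
  shows "e t k = e s k"
proof -
  have "mass_flow F e a b s t = 0" if "a < d" "b < d" "a \<noteq> b" for a b
    by (rule mass_flow_flat[of F a b e s t, OF paths[OF that] sde_solution_cadlag[OF sde that(1)] assms(3,4) flat[OF that]])
  then have "(\<Sum>l\<in>{..<d} - {k}. mass_flow F e l k s t) = 0" "(\<Sum>j\<in>{..<d} - {k}. mass_flow F e k j s t) = 0"
    using \<open>k < d\<close> by (auto intro!: sum.neutral)
  then show ?thesis
    using sde_solution_increment[OF sde \<open>k < d\<close> assms(3,4)] by simp
qed

lemma left_lim_eqI:
  assumes "a < x" "\<And>y. a < y \<Longrightarrow> y < x \<Longrightarrow> g y = c"
  shows "left_lim g x = c"
proof -
  have "eventually (\<lambda>y. g y = c) (at_left x)"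
    using eventually_at_left_real[OF assms(1)] by eventually_elim (use assms(2) in auto)
  then have "(g \<longlongrightarrow> c) (at_left x)"
    by (rule tendsto_eventually)
  then show ?thesis
    unfolding left_lim_def by (intro tendsto_Lim) auto
qed

lemma sde_solution_const_before_jump:
  assumes sde: "sde_solution d F e0 e"
    and paths: "\<And>a b. a < d \<Longrightarrow> b < d \<Longrightarrow> a \<noteq> b \<Longrightarrow> counting_path (F a b)"
    and "0 \<le> s" "u \<le> t"
    and jump: "\<And>a b. a < d \<Longrightarrow> b < d \<Longrightarrow> a \<noteq> b \<Longrightarrow>
      F a b t = F a b s + (if (a, b) = (i, j) then 1 else 0)"
    and before: "\<forall>v. s \<le> v \<longrightarrow> v < u \<longrightarrow> F i j v = F i j s"
    and "s \<le> v" "v < u" "l < d"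
  shows "e v l = e s l"
proof (rule sde_solution_flat[OF sde paths \<open>0 \<le> s\<close> \<open>s \<le> v\<close> _ \<open>l < d\<close>])
  fix a b assume ab: "a < d" "b < d" "a \<noteq> b"
  show "F a b v = F a b s"
  proof (cases "(a, b) = (i, j)")
    case True
    then have "a = i" "b = j"
      by auto
    then show ?thesis
      using before \<open>s \<le> v\<close> \<open>v < u\<close> by blast
  next
    case False
    have "v \<le> t"
      using \<open>v < u\<close> \<open>u \<le> t\<close> by simp
    with False show ?thesis
      using counting_path_flat_between[OF paths[OF ab] \<open>0 \<le> s\<close> \<open>s \<le> v\<close>] jump[OF ab] by simp
  qed
qed

lemma sde_solution_single_jump_flow:
  assumes sde: "sde_solution d F e0 e"
    and paths: "\<And>a b. a < d \<Longrightarrow> b < d \<Longrightarrow> a \<noteq> b \<Longrightarrow> counting_path (F a b)"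
    and st: "0 \<le> s" "s \<le> t" and ij: "i < d" "j < d" "i \<noteq> j"
    and jump: "\<And>a b. a < d \<Longrightarrow> b < d \<Longrightarrow> a \<noteq> b \<Longrightarrow>
      F a b t = F a b s + (if (a, b) = (i, j) then 1 else 0)"
    and ab: "a < d" "b < d" "a \<noteq> b"
  shows "mass_flow F e a b s t = (if (a, b) = (i, j) then e s i else 0)"
proof (cases "(a, b) = (i, j)")
  case False
  then have "F a b t = F a b s"
    using jump[OF ab] by simp
  with False show ?thesis
    using mass_flow_flat[of F a b e s t, OF paths[OF ab] sde_solution_cadlag[OF sde ab(1)] st] by auto
next
  case True
  have "F i j s < F i j t"
    using jump[OF ij] by simp
  then obtain u where u: "s < u" "u \<le> t" "F i j s < F i j u"
    and before: "\<forall>v. s \<le> v \<longrightarrow> v < u \<longrightarrow> F i j v = F i j s"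
    using counting_path_first_jump[OF paths[OF ij] st] by blast
  have "F i j u = F i j t"
    using counting_path_mono[OF paths[OF ij], of u t] u st jump[OF ij] by simp
  have cadlag: "cadlag (\<lambda>v. e v i)"
    by (rule sde_solution_cadlag[OF sde ij(1)])
  have left: "left_lim (\<lambda>v. e v i) x = e s i" if "x \<in> {s<..u}" for x
    using that
    by (intro left_lim_eqI[of s] sde_solution_const_before_jump[OF sde paths st(1) u(2) jump before _ _ ij(1)])
      auto
  have "stieltjes_int (F i j) (left_lim (\<lambda>v. e v i)) t = stieltjes_int (F i j) (left_lim (\<lambda>v. e v i)) u"
    using stieltjes_int_flat[OF paths[OF ij] cadlag _ u(2)] \<open>F i j u = F i j t\<close> u(1) st by simp
  also have "\<dots> = stieltjes_int (F i j) (left_lim (\<lambda>v. e v i)) s + e s i"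
    using stieltjes_int_const_integrand[OF paths[OF ij] cadlag st(1) less_imp_le[OF u(1)] left]
      \<open>F i j u = F i j t\<close> jump[OF ij] by simp
  finally show ?thesis
    using True by (simp add: mass_flow_def)
qed

lemma sde_solution_single_jump:
  assumes sde: "sde_solution d F e0 e"
    and paths: "\<And>a b. a < d \<Longrightarrow> b < d \<Longrightarrow> a \<noteq> b \<Longrightarrow> counting_path (F a b)"
    and st: "0 \<le> s" "s \<le> t" and ij: "i < d" "j < d" "i \<noteq> j"
    and jump: "\<And>a b. a < d \<Longrightarrow> b < d \<Longrightarrow> a \<noteq> b \<Longrightarrow>
      F a b t = F a b s + (if (a, b) = (i, j) then 1 else 0)"
    and "k < d"
  shows "e t k = shift_mass (i, j) (e s) k"
proof -
  note flow = sde_solution_single_jump_flow[OF sde paths st ij jump]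
  have "(\<Sum>l\<in>{..<d} - {k}. mass_flow F e l k s t) = (\<Sum>l\<in>{..<d} - {k}. if l = i \<and> k = j then e s i else 0)"
    by (rule sum.cong) (use \<open>k < d\<close> flow in auto)
  also have "\<dots> = (if k = j then e s i else 0)"
    using ij by (cases "k = j") auto
  finally have inflow: "(\<Sum>l\<in>{..<d} - {k}. mass_flow F e l k s t) = (if k = j then e s i else 0)" .
  have "(\<Sum>b\<in>{..<d} - {k}. mass_flow F e k b s t) = (\<Sum>b\<in>{..<d} - {k}. if k = i \<and> b = j then e s i else 0)"
    by (rule sum.cong) (use \<open>k < d\<close> flow in auto)
  also have "\<dots> = (if k = i then e s i else 0)"
    using ij by (cases "k = i") auto
  finally show ?thesis
    using sde_solution_increment[OF sde \<open>k < d\<close> st] inflow ij by auto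
qed

lemma sde_solution_word:
  assumes sde: "sde_solution d F e0 e"
    and paths: "\<And>a b. a < d \<Longrightarrow> b < d \<Longrightarrow> a \<noteq> b \<Longrightarrow> counting_path (F a b)"
    and w: "set w \<subseteq> {(i, j). i < d \<and> j < d \<and> i \<noteq> j}"
    and jumps: "\<And>q a b. q < length w \<Longrightarrow> a < d \<Longrightarrow> b < d \<Longrightarrow> a \<noteq> b \<Longrightarrow>
      F a b (real (n + q) + 1) - F a b (real (n + q)) = (if (a, b) = w ! q then 1 else 0)"
    and "k < d"
  shows "e (real (n + length w)) k = shift_mass_word w (e (real n)) k"
  using w jumps \<open>k < d\<close>
proof (induction w arbitrary: k rule: rev_induct)
  case Nil
  then show ?case by simp
next
  case (snoc x w)
  obtain i j where x: "x = (i, j)" and ij: "i < d" "j < d" "i \<noteq> j"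
    using snoc.prems(1) by auto
  have IH: "e (real (n + length w)) l = shift_mass_word w (e (real n)) l" if "l < d" for l
  proof (rule snoc.IH[OF _ _ that])
    show "set w \<subseteq> {(i, j). i < d \<and> j < d \<and> i \<noteq> j}"
      using snoc.prems(1) by simp
    show "F a b (real (n + q) + 1) - F a b (real (n + q)) = (if (a, b) = w ! q then 1 else 0)"
      if "q < length w" "a < d" "b < d" "a \<noteq> b" for q a b
      using snoc.prems(2)[of q a b] that by (simp add: nth_append)
  qed
  have "e (real (n + length w) + 1) k = shift_mass (i, j) (e (real (n + length w))) k"
  proof (rule sde_solution_single_jump[OF sde paths _ _ ij _ snoc.prems(3)])
    fix a b assume ab: "a < d" "b < d" "a \<noteq> b"
    \<comment> \<open>the increment in \<open>jumps\<close> is truncated subtraction; monotonicity makes it exact\<close>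
    have "F a b (real (n + length w)) \<le> F a b (real (n + length w) + 1)"
      by (rule counting_path_mono[OF paths[OF ab]]) simp_all
    then show "F a b (real (n + length w) + 1) = F a b (real (n + length w)) + (if (a, b) = (i, j) then 1 else 0)"
      using snoc.prems(2)[of "length w" a b] ab x by auto
  qed simp_all
  then show ?case
    using IH ij snoc.prems(3) by (simp add: shift_mass_word_snoc x add.commute)
qed

lemma sde_solution_synchronized:
  assumes sde: "sde_solution d F e0 e" and "e0 \<in> std_basis d"
    and paths: "\<And>a b. a < d \<Longrightarrow> b < d \<Longrightarrow> a \<noteq> b \<Longrightarrow> counting_path (F a b)"
    and w: "set w \<subseteq> {(i, j). i < d \<and> j < d \<and> i \<noteq> j}" "\<forall>l<d. redirect_word w l = c"
    and jumps: "\<And>q a b. q < length w \<Longrightarrow> a < d \<Longrightarrow> b < d \<Longrightarrow> a \<noteq> b \<Longrightarrow>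
      F a b (real (n + q) + 1) - F a b (real (n + q)) = (if (a, b) = w ! q then 1 else 0)"
    and "k < d"
  shows "e (real (n + length w)) k = (if k = c then 1 else 0)"
proof -
  have "e (real (n + length w)) k = shift_mass_word w (e (real n)) k"
    by (rule sde_solution_word[OF sde paths w(1) jumps \<open>k < d\<close>])
  also have "\<dots> = (if k = c then \<Sum>l<d. e (real n) l else 0)"
    by (rule shift_mass_word_synchronizing[OF w \<open>k < d\<close>])
  also have "(\<Sum>l<d. e (real n) l) = (\<Sum>l<d. e0 l)"
    by (rule sde_solution_sum[OF sde]) simp
  also have "\<dots> = 1"
    using \<open>e0 \<in> std_basis d\<close> by (auto simp: std_basis_def)
  finally show ?thesis .
qed

lemma sde_solutions_coalesce:
  assumes sde: "sde_solution d F e0 e" "sde_solution d F e0' e'"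
    and basis: "e0 \<in> std_basis d" "e0' \<in> std_basis d"
    and paths: "\<forall>p\<in>{(i, j). i < d \<and> j < d \<and> i \<noteq> j}. counting_path (F (fst p) (snd p))"
    and w: "set w \<subseteq> {(i, j). i < d \<and> j < d \<and> i \<noteq> j}" "\<forall>l<d. redirect_word w l = c"
    and window: "\<exists>m. \<forall>p\<in>{(i, j). i < d \<and> j < d \<and> i \<noteq> j}. \<forall>q<length w.
      F (fst p) (snd p) (real (m * length w + q) + 1) - F (fst p) (snd p) (real (m * length w + q))
        = (if p = w ! q then 1 else 0)"
  shows "\<exists>T\<ge>0. \<forall>k<d. e T k = e' T k"
proof -
  obtain m where m: "\<forall>p\<in>{(i, j). i < d \<and> j < d \<and> i \<noteq> j}. \<forall>q<length w.
      F (fst p) (snd p) (real (m * length w + q) + 1) - F (fst p) (snd p) (real (m * length w + q))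
        = (if p = w ! q then 1 else 0)"
    using window by blast
  have paths': "counting_path (F a b)" if "a < d" "b < d" "a \<noteq> b" for a b
    using bspec[OF paths, of "(a, b)"] that by simp
  have jumps: "F a b (real (m * length w + q) + 1) - F a b (real (m * length w + q))
      = (if (a, b) = w ! q then 1 else 0)" if "q < length w" "a < d" "b < d" "a \<noteq> b" for q a b
    using bspec[OF m, of "(a, b)"] that by simp
  have "e (real (m * length w + length w)) k = e' (real (m * length w + length w)) k" if "k < d" for k
    using sde_solution_synchronized[OF sde(1) basis(1) paths' w jumps that]
      sde_solution_synchronized[OF sde(2) basis(2) paths' w jumps that] by simp
  then show ?thesis
    by (intro exI[of _ "real (m * length w + length w)"]) simp
qed

section \<open>Independent blocks of Poisson increments\<close>

abbreviation counting_paths :: "(real \<Rightarrow> nat) measure" where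
  "counting_paths \<equiv> Pi\<^sub>M UNIV (\<lambda>_. count_space UNIV)"

lemma finite_slice:
  assumes "finite K"
  shows "finite {b. (a, b) \<in> K}"
proof -
  have "{b. (a, b) \<in> K} \<subseteq> snd ` K"
  proof
    fix b assume "b \<in> {b. (a, b) \<in> K}"
    then show "b \<in> snd ` K"
      by (intro rev_image_eqI[of "(a, b)"]) simp_all
  qed
  then show ?thesis
    using assms by (rule finite_subset[OF _ finite_imageI])
qed

lemma (in prob_space) indep_sets_Sigma:
  assumes indep: "indep_sets F I"
    and G: "\<And>a. a \<in> I \<Longrightarrow> indep_sets (G a) (J a)"
    and sub: "\<And>a b. a \<in> I \<Longrightarrow> b \<in> J a \<Longrightarrow> G a b \<subseteq> F a"
    and sigma: "\<And>a. a \<in> I \<Longrightarrow> sigma_algebra (space M) (F a)"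
  shows "indep_sets (\<lambda>x. G (fst x) (snd x)) (Sigma I J)"
proof (rule indep_setsI)
  fix x assume "x \<in> Sigma I J"
  then have "F (fst x) \<subseteq> events"
    using indep[unfolded indep_sets_def, THEN conjunct1] by auto
  moreover have "G (fst x) (snd x) \<subseteq> F (fst x)"
    using \<open>x \<in> Sigma I J\<close> sub by (cases x) auto
  ultimately show "G (fst x) (snd x) \<subseteq> events"
    by (rule order_trans[rotated])
next
  fix A K assume K: "K \<noteq> {}" "K \<subseteq> Sigma I J" "finite K" and A: "\<forall>x\<in>K. A x \<in> G (fst x) (snd x)"
  define B where "B a = {b. (a, b) \<in> K}" for a
  have K_eq: "K = Sigma (fst ` K) B"
    by (force simp: B_def)
  have B_fin: "finite (B a)" for a
    using finite_slice[OF \<open>finite K\<close>] by (simp add: B_def)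
  have B_ne: "B a \<noteq> {}" if "a \<in> fst ` K" for a
    using that by (force simp: B_def)
  have "(\<Inter>x\<in>K. A x) = (\<Inter>a\<in>fst ` K. \<Inter>b\<in>B a. A (a, b))"
    unfolding B_def by fastforce
  then have "prob (\<Inter>x\<in>K. A x) = prob (\<Inter>a\<in>fst ` K. \<Inter>b\<in>B a. A (a, b))"
    by simp
  also have "\<dots> = (\<Prod>a\<in>fst ` K. prob (\<Inter>b\<in>B a. A (a, b)))"
  proof (rule indep_setsD[OF indep])
    show "\<forall>a\<in>fst ` K. (\<Inter>b\<in>B a. A (a, b)) \<in> F a"
    proof
      fix a assume a: "a \<in> fst ` K"
      then have "a \<in> I"
        using K by auto
      interpret sigma_algebra "space M" "F a"
        by (rule sigma[OF \<open>a \<in> I\<close>])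
      have "A (a, b) \<in> F a" if "b \<in> B a" for b
      proof -
        have "(a, b) \<in> K"
          using that by (simp add: B_def)
        then have "A (a, b) \<in> G a b" "b \<in> J a"
          using A K by auto
        then show ?thesis
          using sub[OF \<open>a \<in> I\<close>] by blast
      qed
      then show "(\<Inter>b\<in>B a. A (a, b)) \<in> F a"
        using B_fin B_ne[OF a] by (intro finite_INT) auto
    qed
  qed (use K in auto)
  also have "\<dots> = (\<Prod>a\<in>fst ` K. \<Prod>b\<in>B a. prob (A (a, b)))"
    by (intro prod.cong refl indep_setsD[OF G])
      (use K A B_fin B_ne in \<open>auto simp: B_def\<close>)
  also have "\<dots> = (\<Prod>x\<in>K. prob (A x))"
    by (subst (2) K_eq) (simp add: prod.Sigma B_fin \<open>finite K\<close>)
  finally show "prob (\<Inter>x\<in>K. A x) = (\<Prod>x\<in>K. prob (A x))" .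
qed

lemma (in prob_space) indep_events_sets:
  "indep_events E I \<Longrightarrow> i \<in> I \<Longrightarrow> E i \<in> events"
  unfolding indep_events_def_alt indep_sets_def by blast

lemma (in prob_space) prob_Inter_indep_events:
  assumes "indep_events E I" "K \<subseteq> I" "finite K"
  shows "prob (space M \<inter> (\<Inter>x\<in>K. E x)) = (\<Prod>x\<in>K. prob (E x))"
proof (cases "K = {}")
  case False
  then obtain x where "x \<in> K"
    by blast
  have "E x \<in> events"
    using indep_events_sets[OF assms(1)] \<open>x \<in> K\<close> assms(2) by blast
  then have "E x \<subseteq> space M"
    by (rule sets.sets_into_space)
  then have "(\<Inter>x\<in>K. E x) \<subseteq> space M"
    using INT_lower[OF \<open>x \<in> K\<close>, of E] by (rule order_trans[rotated])
  then have "space M \<inter> (\<Inter>x\<in>K. E x) = (\<Inter>x\<in>K. E x)"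
    by (rule Int_absorb1)
  also have "prob \<dots> = (\<Prod>x\<in>K. prob (E x))"
    by (rule indep_setsD[OF assms(1)[unfolded indep_events_def_alt] assms(2) False assms(3)]) simp
  finally show ?thesis .
qed (simp add: prob_space)

lemma (in prob_space) indep_events_blocks:
  fixes r :: nat
  assumes indep: "indep_events E (I \<times> UNIV)" and "finite I"
  shows "indep_events (\<lambda>m. space M \<inter> (\<Inter>x\<in>I \<times> {m * r..<m * r + r}. E x)) UNIV"
proof -
  define block where "block m = I \<times> {m * r..<m * r + r}" for m
  have "disjoint_family block"
    unfolding disjoint_family_on_def
  proof (intro ballI impI)
    fix m n :: nat assume "m \<noteq> n"
    then have "m * r + r \<le> n * r \<or> n * r + r \<le> m * r"
      by (metis add.commute mult_Suc mult_le_mono1 nat_neq_iff Suc_leI)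
    then show "block m \<inter> block n = {}"
      by (auto simp: block_def)
  qed
  moreover have "(\<Union>m. block m) \<subseteq> I \<times> UNIV"
    by (auto simp: block_def)
  then have "indep_sets (\<lambda>x. {E x}) (\<Union>m. block m)"
    using indep[unfolded indep_events_def_alt] by (rule indep_sets_mono_index)
  ultimately have sigma_indep: "indep_sets (\<lambda>m. sigma_sets (space M) (\<Union>x\<in>block m. {E x})) UNIV"
    by (intro indep_sets_collect_sigma) (auto simp: Int_stable_def)
  have "space M \<inter> (\<Inter>x\<in>block m. E x) \<in> sigma_sets (space M) (\<Union>x\<in>block m. {E x})" for m
  proof -
    have "E x \<in> events" if "x \<in> block m" for x
      using indep_events_sets[OF indep] that by (auto simp: block_def)
    then interpret S: sigma_algebra "space M" "sigma_sets (space M) (\<Union>x\<in>block m. {E x})"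
      by (intro sigma_algebra_sigma_sets) (auto dest: sets.sets_into_space)
    show ?thesis
    proof (cases "block m = {}")
      case False
      have "finite (block m)"
        using \<open>finite I\<close> by (simp add: block_def)
      then have "(\<Inter>x\<in>block m. E x) \<in> sigma_sets (space M) (\<Union>x\<in>block m. {E x})"
        using False by (intro S.finite_INT) (auto intro: sigma_sets.Basic)
      then show ?thesis
        by (rule S.Int[OF S.top])
    qed (simp add: sigma_sets_top)
  qed
  then show ?thesis
    unfolding indep_events_def_alt block_def[symmetric]
    by (intro indep_sets_mono_sets[OF sigma_indep]) auto
qed

lemma (in prob_space) indep_events_compl:
  assumes "indep_events A I"
  shows "indep_events (\<lambda>i. space M - A i) I"
proof -
  have "indep_sets (\<lambda>i. sigma_sets (space M) {A i}) I"
    using assms unfolding indep_events_def_alt by (rule indep_sets_sigma) (auto simp: Int_stable_def)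
  then show ?thesis
    unfolding indep_events_def_alt
    by (rule indep_sets_mono_sets) (auto intro: sigma_sets.Compl sigma_sets.Basic)
qed

lemma (in prob_space) AE_exists_indep_event:
  fixes A :: "nat \<Rightarrow> 'a set"
  assumes indep: "indep_events A UNIV" and p: "\<And>m. p \<le> prob (A m)" "0 < p"
  shows "AE \<omega> in M. \<exists>m. \<omega> \<in> A m"
proof -
  define C where "C m = space M - A m" for m
  have C_events: "C m \<in> events" for m
    using indep_events_sets[OF indep] by (simp add: C_def)
  have "prob (\<Inter>m. C m) \<le> (1 - p) ^ n" for n
  proof -
    have "space M \<inter> (\<Inter>m<n. C m) \<in> events"
      using C_events by (cases "n = 0") (auto intro!: sets.finite_INT)
    then have "prob (\<Inter>m. C m) \<le> prob (space M \<inter> (\<Inter>m<n. C m))"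
      by (rule finite_measure_mono[rotated]) (auto simp: C_def)
    also have "\<dots> = (\<Prod>m<n. 1 - prob (A m))"
      using prob_Inter_indep_events[OF indep_events_compl[OF indep], of "{..<n}"] indep_events_sets[OF indep]
      by (simp add: C_def prob_compl)
    also have "\<dots> \<le> (\<Prod>m<n. 1 - p)"
      using p(1) by (intro prod_mono) auto
    finally show ?thesis by simp
  qed
  moreover have "(\<lambda>n. (1 - p) ^ n) \<longlonglongrightarrow> 0"
  proof (rule LIMSEQ_power_zero)
    have "p \<le> 1"
      using p(1)[of 0] prob_le_1[of "A 0"] by linarith
    then show "norm (1 - p) < 1"
      using p(2) by simp
  qed
  ultimately have "prob (\<Inter>m. C m) \<le> 0"
    by (intro tendsto_lowerbound[of "\<lambda>n. (1 - p) ^ n"]) (auto intro: always_eventually)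
  then have "prob (\<Inter>m. C m) = 0"
    by (intro antisym measure_nonneg)
  moreover have "(\<Inter>m. C m) \<in> events"
    using C_events by auto
  ultimately have "(\<Inter>m. C m) \<in> null_sets M"
    by (simp add: null_sets_def emeasure_eq_measure)
  then show ?thesis
    by (rule AE_I') (auto simp: C_def)
qed

lemma (in prob_space) AE_exists_periodic_block:
  fixes r :: nat
  assumes indep: "indep_events E (P \<times> UNIV)" and "finite P"
    and prob: "\<And>p g. p \<in> P \<Longrightarrow> prob (E (p, g)) = pr p (g mod r)"
    and pos: "\<And>p q. p \<in> P \<Longrightarrow> q < r \<Longrightarrow> 0 < pr p q"
  shows "AE \<omega> in M. \<exists>m. \<forall>p\<in>P. \<forall>q<r. \<omega> \<in> E (p, m * r + q)"
proof -
  define A where "A m = space M \<inter> (\<Inter>x\<in>P \<times> {m * r..<m * r + r}. E x)" for m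
  have "prob (A m) = (\<Prod>p\<in>P. \<Prod>q<r. pr p q)" for m
  proof -
    have "prob (A m) = (\<Prod>x\<in>P \<times> {m * r..<m * r + r}. prob (E x))"
      unfolding A_def by (rule prob_Inter_indep_events[OF indep]) (use \<open>finite P\<close> in auto)
    also have "\<dots> = (\<Prod>p\<in>P. \<Prod>g\<in>{m * r..<m * r + r}. prob (E (p, g)))"
      by (simp add: prod.cartesian_product case_prod_unfold)
    also have "\<dots> = (\<Prod>p\<in>P. \<Prod>q<r. prob (E (p, m * r + q)))"
    proof (rule prod.cong[OF refl])
      fix p
      show "(\<Prod>g\<in>{m * r..<m * r + r}. prob (E (p, g))) = (\<Prod>q<r. prob (E (p, m * r + q)))"
        using prod.atLeastLessThan_shift_bounds[of "\<lambda>g. prob (E (p, g))" 0 "m * r" r]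
        by (simp add: atLeast0LessThan add.commute comp_def)
    qed
    also have "\<dots> = (\<Prod>p\<in>P. \<Prod>q<r. pr p q)"
      by (intro prod.cong refl) (simp add: prob add.commute[of "m * r"])
    finally show ?thesis .
  qed
  moreover have "0 < (\<Prod>p\<in>P. \<Prod>q<r. pr p q)"
    using pos by (intro prod_pos) auto
  ultimately have "AE \<omega> in M. \<exists>m. \<omega> \<in> A m"
    unfolding A_def by (intro AE_exists_indep_event indep_events_blocks[OF indep \<open>finite P\<close>]) auto
  then show ?thesis
  proof eventually_elim
    case (elim \<omega>)
    then obtain m where "\<omega> \<in> A m" ..
    then have "\<forall>p\<in>P. \<forall>q<r. \<omega> \<in> E (p, m * r + q)"
      by (auto simp: A_def)
    then show ?case ..
  qed
qed

lemma (in prob_space) indep_sets_image: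
  assumes indep: "indep_sets F (f ` I)" and "inj_on f I"
  shows "indep_sets (\<lambda>i. F (f i)) I"
proof (rule indep_setsI)
  show "F (f i) \<subseteq> events" if "i \<in> I" for i
    using indep[unfolded indep_sets_def, THEN conjunct1] that by blast
next
  fix A J assume J: "J \<noteq> {}" "J \<subseteq> I" "finite J" and A: "\<forall>j\<in>J. A j \<in> F (f j)"
  have inj: "inj_on f J"
    using \<open>inj_on f I\<close> J(2) by (rule inj_on_subset)
  define B where "B = A \<circ> the_inv_into J f"
  have B: "B (f j) = A j" if "j \<in> J" for j
    using the_inv_into_f_f[OF inj that] by (simp add: B_def)
  have "prob (\<Inter>j\<in>J. A j) = prob (\<Inter>y\<in>f ` J. B y)"
    using B by simp
  also have "\<dots> = (\<Prod>y\<in>f ` J. prob (B y))"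
    by (rule indep_setsD[OF indep]) (use J A B in auto)
  also have "\<dots> = (\<Prod>j\<in>J. prob (A j))"
    using B by (simp add: prod.reindex[OF inj])
  finally show "prob (\<Inter>j\<in>J. A j) = (\<Prod>j\<in>J. prob (A j))" .
qed

lemma increment_event_measurable:
  "{\<omega> \<in> space M. N \<omega> (real (Suc g)) - N \<omega> (real g) = k} \<in> sets (vimage_algebra (space M) N counting_paths)"
proof -
  have "Measurable.pred counting_paths (\<lambda>h. h (real (Suc g)) - h (real g) = k)"
    by measurable
  then have "{h. h (real (Suc g)) - h (real g) = k} \<in> sets counting_paths"
    by (simp add: pred_def space_PiM)
  then show ?thesis
    by (auto simp: sets_vimage_algebra2 space_PiM intro!: exI[of _ "{h. h (real (Suc g)) - h (real g) = k}"])
qed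

lemma (in prob_space) poisson_process_prob_increment:
  assumes "poisson_process M r N"
  shows "prob {\<omega> \<in> space M. N \<omega> (real (Suc g)) - N \<omega> (real g) = k} = r ^ k / fact k * exp (- r)"
  using assms unfolding poisson_process_def by simp

lemma (in prob_space) poisson_process_indep_increments:
  assumes "poisson_process M r N"
  shows "indep_events (\<lambda>g. {\<omega> \<in> space M. N \<omega> (real (Suc g)) - N \<omega> (real g) = c g}) UNIV"
  unfolding indep_events_def_alt
proof (subst indep_sets_finite_index_sets, intro allI impI)
  fix J :: "nat set" assume "J \<noteq> {}" "finite J"
  define n where "n = Suc (Max J)"
  have "J \<subseteq> {..<n}"
    using \<open>finite J\<close> by (auto simp: n_def le_imp_less_Suc)
  have "indep_vars (\<lambda>_. count_space UNIV) (\<lambda>i \<omega>. N \<omega> (real (Suc i)) - N \<omega> (real i)) {..<n}"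
    using assms unfolding poisson_process_def by (auto dest!: spec[of _ n] spec[of _ real])
  then have "indep_sets (\<lambda>g. {{\<omega> \<in> space M. N \<omega> (real (Suc g)) - N \<omega> (real g) = c g}}) {..<n}"
    unfolding indep_vars_def2 by (elim conjE indep_sets_mono_sets) (auto intro!: exI[of _ "{c _}"])
  then show "indep_sets (\<lambda>g. {{\<omega> \<in> space M. N \<omega> (real (Suc g)) - N \<omega> (real g) = c g}}) J"
    by (rule indep_sets_mono_index[OF \<open>J \<subseteq> {..<n}\<close>])
qed

lemma (in prob_space) poisson_family_indep_increments:
  assumes poisson: "\<And>p. p \<in> P \<Longrightarrow> poisson_process M (L p) (N p)"
    and indep: "indep_sets (\<lambda>p. sets (vimage_algebra (space M) (N p) counting_paths)) P"
  shows "indep_events (\<lambda>(p, g). {\<omega> \<in> space M. N p \<omega> (real (Suc g)) - N p \<omega> (real g) = c p g}) (P \<times> UNIV)"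
proof -
  have "indep_sets (\<lambda>x. {{\<omega> \<in> space M. N (fst x) \<omega> (real (Suc (snd x))) - N (fst x) \<omega> (real (snd x)) = c (fst x) (snd x)}})
      (P \<times> UNIV)"
  proof (rule indep_sets_Sigma[OF indep])
    show "indep_sets (\<lambda>g. {{\<omega> \<in> space M. N p \<omega> (real (Suc g)) - N p \<omega> (real g) = c p g}}) UNIV"
      if "p \<in> P" for p
      using poisson_process_indep_increments[OF poisson[OF that]] by (simp add: indep_events_def_alt)
    show "sigma_algebra (space M) (sets (vimage_algebra (space M) (N p) counting_paths))" for p
      using sets.sigma_algebra_axioms[of "vimage_algebra (space M) (N p) counting_paths"] by simp
  qed (simp del: of_nat_Suc add: increment_event_measurable)
  then show ?thesis
    by (simp add: indep_events_def_alt case_prod_beta)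
qed

lemma (in prob_space) AE_poisson_word_window:
  fixes N :: "'i \<Rightarrow> 'a \<Rightarrow> real \<Rightarrow> nat" and w :: "'i list"
  assumes "finite P"
    and poisson: "\<And>p. p \<in> P \<Longrightarrow> poisson_process M (L p) (N p)"
    and indep: "indep_sets (\<lambda>p. sets (vimage_algebra (space M) (N p) counting_paths)) P"
    and rates: "\<And>p. p \<in> set w \<Longrightarrow> 0 < L p"
  shows "AE \<omega> in M. \<exists>m. \<forall>p\<in>P. \<forall>q<length w.
    N p \<omega> (real (m * length w + q) + 1) - N p \<omega> (real (m * length w + q)) = (if p = w ! q then 1 else 0)"
proof -
  define r where "r = length w"
  define c where "c p g = (if p = w ! (g mod r) then 1 else 0 :: nat)" for p g
  define E where "E = (\<lambda>(p, g). {\<omega> \<in> space M. N p \<omega> (real (Suc g)) - N p \<omega> (real g) = c p g})"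
  have "AE \<omega> in M. \<exists>m. \<forall>p\<in>P. \<forall>q<r. \<omega> \<in> E (p, m * r + q)"
  proof (rule AE_exists_periodic_block[where pr = "\<lambda>p q. L p ^ c p q / fact (c p q) * exp (- L p)"])
    show "indep_events E (P \<times> UNIV)"
      unfolding E_def by (rule poisson_family_indep_increments[OF poisson indep])
    show "prob (E (p, g)) = L p ^ c p (g mod r) / fact (c p (g mod r)) * exp (- L p)" if "p \<in> P" for p g
      using poisson_process_prob_increment[OF poisson[OF that]] by (simp add: E_def c_def)
    show "0 < L p ^ c p q / fact (c p q) * exp (- L p)" if "q < r" for p q
      using rates[of p] that by (auto simp: c_def r_def)
  qed (rule \<open>finite P\<close>)
  then show ?thesis
  proof eventually_elim
    case (elim \<omega>)
    then obtain m where m: "\<forall>p\<in>P. \<forall>q<r. \<omega> \<in> E (p, m * r + q)" ..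
    have "N p \<omega> (real (m * r + q) + 1) - N p \<omega> (real (m * r + q)) = (if p = w ! q then 1 else 0)"
      if "p \<in> P" "q < r" for p q
      using bspec[OF m that(1), rule_format, OF that(2)] that(2) by (simp add: E_def c_def add.commute)
    then show ?case
      unfolding r_def by blast
  qed
qed

lemma (in prob_space) poisson_process_AE_counting_path:
  assumes "poisson_process M r N"
  shows "AE \<omega> in M. counting_path (N \<omega>)"
proof -
  have "AE \<omega> in M. N \<omega> 0 = 0 \<and> mono_on {0..} (N \<omega>) \<and>
      (\<forall>t\<ge>0. ((\<lambda>u. real (N \<omega> u)) \<longlongrightarrow> real (N \<omega> t)) (at_right t))"
    using assms unfolding poisson_process_def by blast
  then show ?thesis
    by eventually_elim (simp add: counting_path_def)
qed

lemma first_hitting_indicator_tendsto_0: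
  assumes "0 \<le> T" "X T = X' T"
  shows "(\<lambda>n::nat. if ereal (real n) \<le> Inf {ereal t | t. 0 \<le> t \<and> X t = X' t} then 1 else (0::real))
    \<longlonglongrightarrow> 0"
proof -
  have Inf_le: "Inf {ereal t | t. 0 \<le> t \<and> X t = X' t} \<le> ereal T"
    by (rule Inf_lower) (use assms in blast)
  obtain n0 :: nat where "T < real n0"
    using reals_Archimedean2 by blast
  show ?thesis
  proof (rule tendsto_eventually, rule eventually_sequentiallyI[of n0])
    fix n assume "n0 \<le> n"
    then have "ereal T < ereal (real n)"
      using \<open>T < real n0\<close> by simp
    then have "\<not> ereal (real n) \<le> Inf {ereal t | t. 0 \<le> t \<and> X t = X' t}"
      using Inf_le by (meson leD order_trans)
    then show "(if ereal (real n) \<le> Inf {ereal t | t. 0 \<le> t \<and> X t = X' t} then 1 else 0) = (0::real)"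
      by simp
  qed
qed

theorem lemma2p2:
  fixes M :: "'w measure"
    and d :: nat
    and L :: "nat \<Rightarrow> nat \<Rightarrow> real"
    and a :: "nat \<Rightarrow> 'b :: real_vector"
    and N :: "nat \<Rightarrow> nat \<Rightarrow> 'w \<Rightarrow> real \<Rightarrow> nat"
    and eta0 eta0' :: "'w \<Rightarrow> nat \<Rightarrow> real"
    and eta eta' :: "'w \<Rightarrow> real \<Rightarrow> nat \<Rightarrow> real"
  assumes "prob_space M"
    and "intensity_matrix d L"
    and "ergodic_chain d L"
    and "inj_on a {..<d}"
    and "\<And>i j. i < d \<Longrightarrow> j < d \<Longrightarrow> i \<noteq> j \<Longrightarrow> poisson_process M (L i j) (N i j)"
    and "eta0 \<in> measurable M (Pi\<^sub>M UNIV (\<lambda>_. borel))"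
    and "eta0' \<in> measurable M (Pi\<^sub>M UNIV (\<lambda>_. borel))"
    and "\<And>\<omega>. \<omega> \<in> space M \<Longrightarrow> eta0 \<omega> \<in> std_basis d"
    and "\<And>\<omega>. \<omega> \<in> space M \<Longrightarrow> eta0' \<omega> \<in> std_basis d"
    and "prob_space.indep_sets M
           (\<lambda>x. case x of
                  Inl (i, j) \<Rightarrow> sets (vimage_algebra (space M) (N i j)
                                    (Pi\<^sub>M UNIV (\<lambda>_::real. count_space (UNIV :: nat set))))
                | Inr b \<Rightarrow> sets (vimage_algebra (space M) (if b then eta0 else eta0')
                                    (Pi\<^sub>M UNIV (\<lambda>_::nat. (borel :: real measure)))))
           (Inl ` {(i, j). i < d \<and> j < d \<and> i \<noteq> j} \<union> Inr ` UNIV)"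
    and "AE \<omega> in M. sde_solution d (\<lambda>i j. N i j \<omega>) (eta0 \<omega>) (eta \<omega>)"
    and "AE \<omega> in M. sde_solution d (\<lambda>i j. N i j \<omega>) (eta0' \<omega>) (eta' \<omega>)"
  shows "AE \<omega> in M.
           (let X = (\<lambda>t. \<Sum>i<d. eta \<omega> t i *\<^sub>R a i);
                X' = (\<lambda>t. \<Sum>i<d. eta' \<omega> t i *\<^sub>R a i);
                tau = Inf {ereal t | t. 0 \<le> t \<and> X t = X' t}
            in ((\<lambda>n::nat. if ereal (real n) \<le> tau then 1 else (0::real)) \<longlonglongrightarrow> 0))"
proof -
  interpret prob_space M by fact
  let ?P = "{(i, j). i < d \<and> j < d \<and> i \<noteq> j}"
  have "finite ?P"
    by (rule finite_subset[of _ "{..<d} \<times> {..<d}"]) auto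
  obtain w where w: "set w \<subseteq> jump_relation d L" "\<forall>l<d. redirect_word w l = 0"
    using ergodic_chain_synchronizing_word[OF assms(3,2)] by blast
  then have "set w \<subseteq> ?P"
    by (auto simp: jump_relation_def)
  have "indep_sets (\<lambda>p. sets (vimage_algebra (space M) (N (fst p) (snd p)) counting_paths)) ?P"
    using indep_sets_image[OF indep_sets_mono_index[OF _ assms(10)], of Inl ?P]
    by (auto simp: case_prod_unfold)
  then have "AE \<omega> in M. \<exists>m. \<forall>p\<in>?P. \<forall>q<length w. N (fst p) (snd p) \<omega> (real (m * length w + q) + 1)
      - N (fst p) (snd p) \<omega> (real (m * length w + q)) = (if p = w ! q then 1 else 0)"
    by (intro AE_poisson_word_window[where L = "\<lambda>p. L (fst p) (snd p)", OF \<open>finite ?P\<close>])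
      (use assms(5) w(1) in \<open>auto simp: jump_relation_def\<close>)
  moreover have "AE \<omega> in M. \<forall>p\<in>?P. counting_path (N (fst p) (snd p) \<omega>)"
    by (rule AE_finite_allI[OF \<open>finite ?P\<close>]) (auto intro!: poisson_process_AE_counting_path assms(5))
  ultimately show ?thesis
    using assms(11,12) AE_space
  proof eventually_elim
    case (elim \<omega>)
    obtain T where "0 \<le> T" "\<forall>k<d. eta \<omega> T k = eta' \<omega> T k"
      using sde_solutions_coalesce[OF elim(3,4) assms(8,9)[OF elim(5)] elim(2) \<open>set w \<subseteq> ?P\<close> w(2) elim(1)]
      by blast
    then show ?case
      unfolding Let_def by (intro first_hitting_indicator_tendsto_0[of T] sum.cong) simp_all
  qed
qed

end
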